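(* Consider a multi-sender single-uniprior index-coding instance with binary messages, information-flow graph $\mathcal{G}$ and message graph $\mathcal{U}$, and let $\mathcal{V}_S$ be the vertex set of a leaf SCC of $\mathcal{G}$. Form $(\mathcal{G}',\mathcal{U}')$ by pruning this leaf SCC: select an arbitrary $v\in\mathcal{V}_S$ and remove all outgoing arcs of $v$ from $\mathcal{G}$ (the message graph and senders are unchanged). Then \[ N_{\mathrm{SCC}}(\mathcal{G}')=N_{\mathrm{SCC}}(\mathcal{G})-1,\qquad \tilde{\ell}^*(\mathcal{G}',\mathcal{U}')\le\tilde{\ell}^*(\mathcal{G},\mathcal{U}),\qquad V_{\mathrm{out}}(\mathcal{G}')=V_{\mathrm{out}}(\mathcal{G})-1, \] where $N_{\mathrm{SCC}}(\cdot)$ denotes the number of leaf SCCs.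
   Context: Multi-sender single-uniprior index coding with binary messages: there are $n$ receivers and $n$ independent messages $x_1,\dots,x_n$, each a single bit uniformly distributed on $\{0,1\}$. Receiver $i$ knows $x_i$ a priori and requests a set of messages not containing $x_i$. The information-flow graph is the directed graph $\mathcal{G}=(\mathcal{V},\mathcal{A})$ with an arc $(j\to i)$ iff receiver $i$ requests $x_j$. There are $S$ senders; sender $s$ knows a subset $\mathcal{M}_s$ of the messages, and every message is known to some sender. An index code consists of, for each sender $s$, an encoding function mapping the messages in $\mathcal{M}_s$ to $\ell_s$ bits, and for each receiver $i$ a decoding function that, from all senders' outputs together with $x_i$, returns every message requested by $i$, for all message values; its length is $\sum_s \ell_s$. $\tilde{\ell}^*(\mathcal{G},\mathcal{U})$ is the minimum length of an index code for the instance. The message graph $\mathcal{U}$ is the undirected graph on $\mathcal{V}$ with an edge $\{i,j\}$ iff some sender knows both $x_i$ and $x_j$. A leaf vertex of $\mathcal{G}$ has no outgoing arcs; $V_{\mathrm{out}}(\mathcal{G})$ is the number of non-leaf vertices. A leaf SCC is a strongly connected component of $\mathcal{G}$ with at least two vertices and no arc from it to a vertex outside it. *)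

theory Defs
  imports Main
begin

text \<open>Vertices (= receivers = messages) are 0..<n. The information-flow graph is a set
  of arcs A; a pair (j, i) in A is the arc j -> i, meaning receiver i requests x_j.
  Senders are 0..<S; sender s knows the messages with indices in M s.\<close>

definition valid_instance :: "nat \<Rightarrow> (nat \<times> nat) set \<Rightarrow> nat \<Rightarrow> (nat \<Rightarrow> nat set) \<Rightarrow> bool" where
  "valid_instance n A S M \<longleftrightarrow>
     A \<subseteq> {0..<n} \<times> {0..<n} \<and> (\<forall>i. (i, i) \<notin> A) \<and>
     (\<forall>s<S. M s \<subseteq> {0..<n}) \<and> (\<forall>j<n. \<exists>s<S. j \<in> M s)"

definition is_index_code ::
  "nat \<Rightarrow> (nat \<times> nat) set \<Rightarrow> nat \<Rightarrow> (nat \<Rightarrow> nat set) \<Rightarrow> (nat \<Rightarrow> nat)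
   \<Rightarrow> (nat \<Rightarrow> (nat \<Rightarrow> bool) \<Rightarrow> bool list)
   \<Rightarrow> (nat \<Rightarrow> (nat \<Rightarrow> bool list) \<Rightarrow> bool \<Rightarrow> nat \<Rightarrow> bool) \<Rightarrow> bool" where
  "is_index_code n A S M l enc dec \<longleftrightarrow>
     (\<forall>s<S. \<forall>x. length (enc s x) = l s) \<and>
     (\<forall>s<S. \<forall>x y. (\<forall>j\<in>M s. x j = y j) \<longrightarrow> enc s x = enc s y) \<and>
     (\<forall>i<n. \<forall>x. \<forall>j. (j, i) \<in> A \<longrightarrow>
        dec i (\<lambda>s. if s < S then enc s x else []) (x i) j = x j)"

definition achievable_length ::
  "nat \<Rightarrow> (nat \<times> nat) set \<Rightarrow> nat \<Rightarrow> (nat \<Rightarrow> nat set) \<Rightarrow> nat \<Rightarrow> bool" where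
  "achievable_length n A S M L \<longleftrightarrow>
     (\<exists>l enc dec. is_index_code n A S M l enc dec \<and> (\<Sum>s<S. l s) = L)"

definition opt_length :: "nat \<Rightarrow> (nat \<times> nat) set \<Rightarrow> nat \<Rightarrow> (nat \<Rightarrow> nat set) \<Rightarrow> nat" where
  "opt_length n A S M = (LEAST L. achievable_length n A S M L)"

definition is_scc :: "nat \<Rightarrow> (nat \<times> nat) set \<Rightarrow> nat set \<Rightarrow> bool" where
  "is_scc n A C \<longleftrightarrow> C \<subseteq> {0..<n} \<and> C \<noteq> {} \<and>
     (\<forall>u\<in>C. \<forall>w\<in>C. (u, w) \<in> A\<^sup>*) \<and>
     (\<forall>u\<in>C. \<forall>w\<in>{0..<n}. (u, w) \<in> A\<^sup>* \<and> (w, u) \<in> A\<^sup>* \<longrightarrow> w \<in> C)"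

definition is_leaf_scc :: "nat \<Rightarrow> (nat \<times> nat) set \<Rightarrow> nat set \<Rightarrow> bool" where
  "is_leaf_scc n A C \<longleftrightarrow> is_scc n A C \<and> card C \<ge> 2 \<and>
     (\<forall>u\<in>C. \<forall>w. (u, w) \<in> A \<longrightarrow> w \<in> C)"

definition N_SCC :: "nat \<Rightarrow> (nat \<times> nat) set \<Rightarrow> nat" where
  "N_SCC n A = card {C. is_leaf_scc n A C}"

definition V_out :: "nat \<Rightarrow> (nat \<times> nat) set \<Rightarrow> nat" where
  "V_out n A = card {i \<in> {0..<n}. \<exists>j. (i, j) \<in> A}"

definition prune :: "(nat \<times> nat) set \<Rightarrow> nat \<Rightarrow> (nat \<times> nat) set" where
  "prune A v = {(a, b) \<in> A. a \<noteq> v}"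

end

theory Submission
  imports Defs
begin

text \<open>A leaf SCC C is closed under arcs, so a path ending outside C never meets C, and a
  path into v \<in> C can be cut at its first visit of v; both kinds of path survive deleting the
  out-arcs of v. Hence the pruned graph has exactly the leaf SCCs of the original one except C:
  a leaf SCC of the pruned graph meeting C would contain the sink v and so be {v}. Deleting
  arcs only removes decoding demands, so every index code remains one, and v loses at least
  one out-arc because C has a second vertex.\<close>

lemma prune_subset: "prune A v \<subseteq> A"
  unfolding prune_def by auto

lemma rtrancl_prune_subset: "(a, b) \<in> (prune A v)\<^sup>* \<Longrightarrow> (a, b) \<in> A\<^sup>*"
  using rtrancl_mono[OF prune_subset] by blast

lemma rtrancl_closed_set:
  assumes closed: "\<forall>u\<in>C. \<forall>w. (u, w) \<in> A \<longrightarrow> w \<in> C" and "(u, w) \<in> A\<^sup>*" "u \<in> C"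
  shows "w \<in> C"
  using assms(2,3) by (induction rule: rtrancl_induct) (use closed in blast)+

lemma rtrancl_prune_outside_closed_set:
  assumes closed: "\<forall>u\<in>C. \<forall>w. (u, w) \<in> A \<longrightarrow> w \<in> C" and "v \<in> C"
    and "(u, w) \<in> A\<^sup>*" "w \<notin> C"
  shows "(u, w) \<in> (prune A v)\<^sup>*"
  using assms(3,4)
proof (induction rule: converse_rtrancl_induct)
  case base
  then show ?case by simp
next
  case (step u y)
  have "y \<notin> C" using rtrancl_closed_set[OF closed step(2)] step(4) by blast
  then have "u \<notin> C" using closed step(1) by blast
  then have "(u, y) \<in> prune A v" using step(1) \<open>v \<in> C\<close> unfolding prune_def by auto
  then show ?case using step by (meson converse_rtrancl_into_rtrancl)
qed

lemma rtrancl_prune_to_pruned: "(u, v) \<in> A\<^sup>* \<Longrightarrow> (u, v) \<in> (prune A v)\<^sup>*"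
proof (induction rule: converse_rtrancl_induct)
  case base
  then show ?case by simp
next
  case (step u y)
  show ?case
  proof (cases "u = v")
    case False
    then have "(u, y) \<in> prune A v" using step(1) unfolding prune_def by auto
    then show ?thesis using step by (meson converse_rtrancl_into_rtrancl)
  qed simp
qed

lemma rtrancl_prune_from_pruned:
  assumes "(v, w) \<in> (prune A v)\<^sup>*" shows "w = v"
  using assms by (cases rule: converse_rtranclE) (auto simp: prune_def)

lemma leaf_scc_subset: "is_leaf_scc n A C \<Longrightarrow> C \<subseteq> {0..<n}"
  unfolding is_leaf_scc_def is_scc_def by blast

lemma leaf_scc_rtrancl: "is_leaf_scc n A C \<Longrightarrow> u \<in> C \<Longrightarrow> w \<in> C \<Longrightarrow> (u, w) \<in> A\<^sup>*"
  unfolding is_leaf_scc_def is_scc_def by blast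

lemma leaf_scc_closed: "is_leaf_scc n A C \<Longrightarrow> \<forall>u\<in>C. \<forall>w. (u, w) \<in> A \<longrightarrow> w \<in> C"
  unfolding is_leaf_scc_def by blast

lemma scc_meets_leaf_scc_eq:
  assumes leaf: "is_leaf_scc n A C" and scc: "is_scc n A D" and meet: "D \<inter> C \<noteq> {}"
  shows "D = C"
proof
  obtain u where u: "u \<in> D" "u \<in> C" using meet by blast
  have D_conn: "\<forall>u\<in>D. \<forall>w\<in>D. (u, w) \<in> A\<^sup>*"
    and D_max: "\<forall>u\<in>D. \<forall>w\<in>{0..<n}. (u, w) \<in> A\<^sup>* \<and> (w, u) \<in> A\<^sup>* \<longrightarrow> w \<in> D"
    using scc unfolding is_scc_def by blast+
  show "D \<subseteq> C"
  proof
    fix w assume "w \<in> D"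
    then have "(u, w) \<in> A\<^sup>*" using D_conn u(1) by blast
    then show "w \<in> C" using rtrancl_closed_set[OF leaf_scc_closed[OF leaf]] u(2) by blast
  qed
  show "C \<subseteq> D"
  proof
    fix w assume "w \<in> C"
    then have "w \<in> {0..<n}" "(u, w) \<in> A\<^sup>*" "(w, u) \<in> A\<^sup>*"
      using leaf_scc_subset[OF leaf] leaf_scc_rtrancl[OF leaf] u(2) by blast+
    then show "w \<in> D" using D_max u(1) by blast
  qed
qed

lemma finite_leaf_sccs: "finite {D. is_leaf_scc n A D}"
  by (rule finite_subset[of _ "Pow {0..<n}"]) (auto simp: is_leaf_scc_def is_scc_def)

lemma leaf_scc_prune_disjoint:
  assumes leaf: "is_leaf_scc n A C" and "v \<in> C" and leaf': "is_leaf_scc n (prune A v) D"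
  shows "D \<inter> C = {}"
proof (rule ccontr)
  assume "D \<inter> C \<noteq> {}"
  then obtain u where u: "u \<in> D" "u \<in> C" by blast
  have "(u, v) \<in> A\<^sup>*" using leaf_scc_rtrancl[OF leaf u(2) \<open>v \<in> C\<close>] .
  then have "v \<in> D"
    using rtrancl_closed_set[OF leaf_scc_closed[OF leaf'] rtrancl_prune_to_pruned] u(1) by blast
  then have "D \<subseteq> {v}"
    using leaf' rtrancl_prune_from_pruned unfolding is_leaf_scc_def is_scc_def by blast
  then have "card D \<le> 1" using card_mono[of "{v}" D] by simp
  then show False using leaf' unfolding is_leaf_scc_def by simp
qed

lemma leaf_scc_of_prune:
  assumes leaf: "is_leaf_scc n A C" and "v \<in> C" and leaf': "is_leaf_scc n (prune A v) D"
  shows "is_leaf_scc n A D"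
proof -
  have disj: "D \<inter> C = {}" using leaf_scc_prune_disjoint[OF assms] .
  note closed = leaf_scc_closed[OF leaf]
  show ?thesis
    unfolding is_leaf_scc_def is_scc_def
  proof (intro conjI ballI allI impI)
    show "D \<subseteq> {0..<n}" "D \<noteq> {}" "2 \<le> card D"
      using leaf' unfolding is_leaf_scc_def is_scc_def by auto
  next
    fix u w assume "u \<in> D" "w \<in> D"
    then show "(u, w) \<in> A\<^sup>*"
      using leaf' rtrancl_prune_subset unfolding is_leaf_scc_def is_scc_def by blast
  next
    fix u w assume u: "u \<in> D" and w: "w \<in> {0..<n}" and r: "(u, w) \<in> A\<^sup>* \<and> (w, u) \<in> A\<^sup>*"
    have "u \<notin> C" using u disj by blast
    then have "w \<notin> C" using r rtrancl_closed_set[OF closed, of w u] by blast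
    then have "(u, w) \<in> (prune A v)\<^sup>*" "(w, u) \<in> (prune A v)\<^sup>*"
      using rtrancl_prune_outside_closed_set[OF closed \<open>v \<in> C\<close>] r \<open>u \<notin> C\<close> by auto
    then show "w \<in> D" using leaf' u w unfolding is_leaf_scc_def is_scc_def by blast
  next
    fix u w assume u: "u \<in> D" and a: "(u, w) \<in> A"
    have "(u, w) \<in> prune A v" using a u disj \<open>v \<in> C\<close> unfolding prune_def by auto
    then show "w \<in> D" using leaf_scc_closed[OF leaf'] u by blast
  qed
qed

lemma leaf_scc_prune:
  assumes leaf: "is_leaf_scc n A C" and "v \<in> C" and leafD: "is_leaf_scc n A D" and "D \<noteq> C"
  shows "is_leaf_scc n (prune A v) D"
proof -
  have "D \<inter> C = {}"
    using scc_meets_leaf_scc_eq[OF leaf] leafD \<open>D \<noteq> C\<close> unfolding is_leaf_scc_def by blast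
  note outside = rtrancl_prune_outside_closed_set[OF leaf_scc_closed[OF leaf] \<open>v \<in> C\<close>]
  show ?thesis
    unfolding is_leaf_scc_def is_scc_def
  proof (intro conjI ballI allI impI)
    show "D \<subseteq> {0..<n}" "D \<noteq> {}" "2 \<le> card D"
      using leafD unfolding is_leaf_scc_def is_scc_def by auto
  next
    fix u w assume "u \<in> D" "w \<in> D"
    then show "(u, w) \<in> (prune A v)\<^sup>*"
      using leafD outside \<open>D \<inter> C = {}\<close> unfolding is_leaf_scc_def is_scc_def by blast
  next
    fix u w assume "u \<in> D" "w \<in> {0..<n}" "(u, w) \<in> (prune A v)\<^sup>* \<and> (w, u) \<in> (prune A v)\<^sup>*"
    then show "w \<in> D"
      using leafD rtrancl_prune_subset unfolding is_leaf_scc_def is_scc_def by blast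
  next
    fix u w assume "u \<in> D" "(u, w) \<in> prune A v"
    then show "w \<in> D" using leaf_scc_closed[OF leafD] prune_subset by blast
  qed
qed

lemma leaf_sccs_prune:
  assumes "is_leaf_scc n A C" and "v \<in> C"
  shows "{D. is_leaf_scc n (prune A v) D} = {D. is_leaf_scc n A D} - {C}"
proof -
  have "D \<noteq> C" if "is_leaf_scc n (prune A v) D" for D
    using leaf_scc_prune_disjoint[OF assms that] \<open>v \<in> C\<close> by blast
  then show ?thesis using leaf_scc_of_prune[OF assms] leaf_scc_prune[OF assms] by blast
qed

lemma N_SCC_prune:
  assumes "is_leaf_scc n A C" and "v \<in> C"
  shows "N_SCC n (prune A v) = N_SCC n A - 1"
  unfolding N_SCC_def leaf_sccs_prune[OF assms] using finite_leaf_sccs assms(1) by simp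

lemma achievable_length_uncoded:
  assumes "valid_instance n A S M"
  shows "achievable_length n A S M (S * n)"
proof -
  define chooser where "chooser j = (SOME s. s < S \<and> j \<in> M s)" for j
  define enc where "enc s x = map (\<lambda>k. k \<in> M s \<and> x k) [0..<n]" for s and x :: "nat \<Rightarrow> bool"
  define dec where "dec i w b j = w (chooser j) ! j"
    for i :: nat and w :: "nat \<Rightarrow> bool list" and b :: bool and j
  have "is_index_code n A S M (\<lambda>_. n) enc dec"
    unfolding is_index_code_def
  proof (intro conjI allI impI ballI)
    fix s and x :: "nat \<Rightarrow> bool" show "length (enc s x) = n" by (simp add: enc_def)
  next
    fix s and x y :: "nat \<Rightarrow> bool" assume "\<forall>j\<in>M s. x j = y j"
    then show "enc s x = enc s y" by (auto simp: enc_def)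
  next
    fix i x j assume "(j, i) \<in> A"
    then have "j < n" using assms unfolding valid_instance_def by auto
    then have "\<exists>s. s < S \<and> j \<in> M s" using assms unfolding valid_instance_def by auto
    then have "chooser j < S \<and> j \<in> M (chooser j)"
      unfolding chooser_def by (rule someI_ex)
    then show "dec i (\<lambda>s. if s < S then enc s x else []) (x i) j = x j"
      using \<open>j < n\<close> by (simp add: dec_def enc_def)
  qed
  then show ?thesis unfolding achievable_length_def by fastforce
qed

lemma is_index_code_antimono:
  "is_index_code n A S M l enc dec \<Longrightarrow> B \<subseteq> A \<Longrightarrow> is_index_code n B S M l enc dec"
  unfolding is_index_code_def by (intro conjI; elim conjE; blast)

lemma achievable_length_antimono:
  "achievable_length n A S M L \<Longrightarrow> B \<subseteq> A \<Longrightarrow> achievable_length n B S M L"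
  unfolding achievable_length_def by (metis is_index_code_antimono)

lemma opt_length_antimono:
  assumes "valid_instance n A S M" "B \<subseteq> A"
  shows "opt_length n B S M \<le> opt_length n A S M"
proof -
  \<comment> \<open>The uncoded scheme only serves to make the \<open>LEAST\<close> in \<open>opt_length\<close> attained.\<close>
  have "achievable_length n A S M (opt_length n A S M)"
    unfolding opt_length_def using achievable_length_uncoded[OF assms(1)] by (rule LeastI)
  then show ?thesis
    unfolding opt_length_def[of n B]
    by (rule Least_le[OF achievable_length_antimono[OF _ assms(2)]])
qed

lemma V_out_prune:
  assumes "v < n" and "(v, y) \<in> A"
  shows "V_out n (prune A v) = V_out n A - 1"
proof -
  have pruned: "{i \<in> {0..<n}. \<exists>j. (i, j) \<in> prune A v} = {i \<in> {0..<n}. \<exists>j. (i, j) \<in> A} - {v}"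
    unfolding prune_def by auto
  have "v \<in> {i \<in> {0..<n}. \<exists>j. (i, j) \<in> A}" using assms by auto
  then show ?thesis unfolding V_out_def pruned by (simp add: card_Diff_singleton)
qed

lemma leaf_scc_out_arc:
  assumes leaf: "is_leaf_scc n A C" and "v \<in> C"
  obtains y where "(v, y) \<in> A"
proof -
  have "card C \<ge> 2" using leaf unfolding is_leaf_scc_def by blast
  then have "\<not> C \<subseteq> {v}" using card_mono[of "{v}" C] by auto
  then obtain w where "w \<in> C" "w \<noteq> v" by blast
  have "(v, w) \<in> A\<^sup>*" using leaf_scc_rtrancl[OF leaf \<open>v \<in> C\<close> \<open>w \<in> C\<close>] .
  from this \<open>w \<noteq> v\<close> obtain y where "(v, y) \<in> A" by (cases rule: converse_rtranclE) auto
  then show ?thesis by (rule that)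
qed

theorem proposition3:
  fixes n S :: nat and A :: "(nat \<times> nat) set" and M :: "nat \<Rightarrow> nat set"
    and C :: "nat set" and v :: nat
  assumes "valid_instance n A S M"
    and "is_leaf_scc n A C"
    and "v \<in> C"
  shows "N_SCC n (prune A v) = N_SCC n A - 1 \<and>
         opt_length n (prune A v) S M \<le> opt_length n A S M \<and>
         V_out n (prune A v) = V_out n A - 1"
proof (intro conjI)
  show "N_SCC n (prune A v) = N_SCC n A - 1"
    using N_SCC_prune[OF assms(2,3)] .
  show "opt_length n (prune A v) S M \<le> opt_length n A S M"
    using opt_length_antimono[OF assms(1) prune_subset] .
  have "v < n" using leaf_scc_subset[OF assms(2)] assms(3) by auto
  obtain y where "(v, y) \<in> A" using leaf_scc_out_arc[OF assms(2,3)] .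
  then show "V_out n (prune A v) = V_out n A - 1"
    using V_out_prune[OF \<open>v < n\<close>] by blast
qed

end
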